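(* In the setting described in the context, if $\omega\in\mathbb{R}$ is an energy eigenvalue, then $m^2-\omega^2>0$.
   Context: Fix real numbers $M>0$, $a$, $Q$ with $M^2=a^2+Q^2$ (extreme Kerr–Newman black hole) and put $\rho:=M$. Fix the rest mass $m>0$ and charge $e\in\mathbb{R}$ of a Dirac particle and a half-integer $k\in\{\pm\frac12,\pm\frac32,\dots\}$. For $\omega,\lambda\in\mathbb{R}$ consider the radial system for $f:(\rho,\infty)\to\mathbb{C}^2$, $$\begin{pmatrix}(r-\rho)\frac{d}{dr}+\frac{iV(r)}{r-\rho} & imr-\lambda\\ -imr-\lambda & (r-\rho)\frac{d}{dr}-\frac{iV(r)}{r-\rho}\end{pmatrix}f(r)=0,\qquad V(r):=\omega(r^2+a^2)+ka+eQr,$$ and the angular system for $g:(0,\pi)\to\mathbb{C}^2$, $$\begin{pmatrix}\frac{d}{d\theta}+\frac{\cot\theta}{2}-W(\theta) & -am\cos\theta+\lambda\\ am\cos\theta+\lambda & -\frac{d}{d\theta}-\frac{\cot\theta}{2}-W(\theta)\end{pmatrix}g(\theta)=0,\qquad W(\theta):=a\omega\sin\theta+\frac{k}{\sin\theta}.$$ A number $\omega\in\mathbb{R}$ is called an energy eigenvalue (for azimuthal quantum number $k$) if there exist $\lambda\in\mathbb{R}$ and nontrivial solutions $f$ of the radial system and $g$ of the angular system with $$\int_\rho^\infty|f(r)|^2\frac{r^2+a^2}{(r-\rho)^2}\,dr<\infty,\qquad\int_0^\pi|g(\theta)|^2\sin\theta\,d\theta<\infty.$$ *)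

theory Defs
  imports "HOL-Analysis.Analysis"
begin

text \<open>Extreme Kerr--Newman setting; rho = M. Spinor components f = (f1, f2), g = (g1, g2).\<close>

definition half_integer :: "real \<Rightarrow> bool" where
  "half_integer k \<longleftrightarrow> (\<exists>n::int. k = real_of_int n + 1/2)"

definition radV :: "real \<Rightarrow> real \<Rightarrow> real \<Rightarrow> real \<Rightarrow> real \<Rightarrow> real \<Rightarrow> real" where
  "radV a Q e k \<omega> r = \<omega> * (r^2 + a^2) + k * a + e * Q * r"

definition angW :: "real \<Rightarrow> real \<Rightarrow> real \<Rightarrow> real \<Rightarrow> real" where
  "angW a k \<omega> \<theta> = a * \<omega> * sin \<theta> + k / sin \<theta>"

definition radial_solution ::
  "real \<Rightarrow> real \<Rightarrow> real \<Rightarrow> real \<Rightarrow> real \<Rightarrow> real \<Rightarrow> real \<Rightarrow> real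
   \<Rightarrow> (real \<Rightarrow> complex) \<Rightarrow> (real \<Rightarrow> complex) \<Rightarrow> bool" where
  "radial_solution M a Q m e k \<omega> lam f1 f2 \<longleftrightarrow>
     (\<forall>r\<in>{M<..}. \<exists>d1 d2.
        (f1 has_vector_derivative d1) (at r) \<and> (f2 has_vector_derivative d2) (at r) \<and>
        complex_of_real (r - M) * d1 + \<i> * complex_of_real (radV a Q e k \<omega> r / (r - M)) * f1 r
          + (\<i> * complex_of_real (m * r) - complex_of_real lam) * f2 r = 0 \<and>
        (- \<i> * complex_of_real (m * r) - complex_of_real lam) * f1 r
          + complex_of_real (r - M) * d2 - \<i> * complex_of_real (radV a Q e k \<omega> r / (r - M)) * f2 r = 0)"

definition angular_solution ::
  "real \<Rightarrow> real \<Rightarrow> real \<Rightarrow> real \<Rightarrow> real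
   \<Rightarrow> (real \<Rightarrow> complex) \<Rightarrow> (real \<Rightarrow> complex) \<Rightarrow> bool" where
  "angular_solution a m k \<omega> lam g1 g2 \<longleftrightarrow>
     (\<forall>\<theta>\<in>{0<..<pi}. \<exists>d1 d2.
        (g1 has_vector_derivative d1) (at \<theta>) \<and> (g2 has_vector_derivative d2) (at \<theta>) \<and>
        d1 + complex_of_real (cot \<theta> / 2) * g1 \<theta> - complex_of_real (angW a k \<omega> \<theta>) * g1 \<theta>
          + complex_of_real (- a * m * cos \<theta> + lam) * g2 \<theta> = 0 \<and>
        complex_of_real (a * m * cos \<theta> + lam) * g1 \<theta>
          - d2 - complex_of_real (cot \<theta> / 2) * g2 \<theta> - complex_of_real (angW a k \<omega> \<theta>) * g2 \<theta> = 0)"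

definition energy_eigenvalue ::
  "real \<Rightarrow> real \<Rightarrow> real \<Rightarrow> real \<Rightarrow> real \<Rightarrow> real \<Rightarrow> real \<Rightarrow> bool" where
  "energy_eigenvalue M a Q m e k \<omega> \<longleftrightarrow>
     (\<exists>lam::real. \<exists>f1 f2 g1 g2.
        radial_solution M a Q m e k \<omega> lam f1 f2 \<and>
        (\<exists>r\<in>{M<..}. f1 r \<noteq> 0 \<or> f2 r \<noteq> 0) \<and>
        angular_solution a m k \<omega> lam g1 g2 \<and>
        (\<exists>\<theta>\<in>{0<..<pi}. g1 \<theta> \<noteq> 0 \<or> g2 \<theta> \<noteq> 0) \<and>
        (\<integral>\<^sup>+ r \<in> {M<..}. ennreal ((cmod (f1 r))^2 + (cmod (f2 r))^2) * ennreal ((r^2 + a^2) / (r - M)^2) \<partial>lborel) < \<infinity> \<and>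
        (\<integral>\<^sup>+ \<theta> \<in> {0<..<pi}. ennreal ((cmod (g1 \<theta>))^2 + (cmod (g2 \<theta>))^2) * ennreal (sin \<theta>) \<partial>lborel) < \<infinity>)"

end

theory Submission
  imports Defs
begin

text \<open>
  Let N = |f1|^2 + |f2|^2 and P = cnj f1 * f2. Because of the weight
  (r^2 + a^2)/(r - M)^2, the radial norm diverges as soon as
  N \<ge> c (r - M) near the horizon or r N \<ge> c near infinity. Pairing the radial
  system with the spinor shows that F = V/(r - M) N + 2 m r Re P - 2 \<lambda> Im P satisfies
  F' = (\<omega> - V(M)/(r - M)^2) N + 2 m Re P, with no derivative of f left.

  If V(M) \<noteq> 0, then (r - M) F / V(M) is comparable to N near the horizon and its
  derivative is O(N); a backward Gronwall argument keeps N bounded below as r \<rightarrow> M.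

  If V(M) = 0 and |\<omega>| \<ge> m, then \<omega> F is nondecreasing, while |F| is O(N) near
  the horizon and O(r N) at infinity, so F vanishes identically. Then F' = 0 forces
  |\<omega>| = m and P = -\<omega>/(2 m) N, whence (r - M) N' = \<beta> N and N is a power of r - M,
  which is never normalisable.
\<close>


lemma has_real_derivative_cmod_power2:
  assumes "(f has_vector_derivative d) (at t)"
  shows "((\<lambda>t. (cmod (f t))\<^sup>2) has_real_derivative 2 * Re (cnj (f t) * d)) (at t)"
proof -
  have "((\<lambda>t. Re (cnj (f t) * f t)) has_real_derivative Re (cnj (f t) * d + cnj d * f t)) (at t)"
    by (auto intro!: derivative_eq_intros assms)
  moreover have "Re (cnj (f t) * d + cnj d * f t) = 2 * Re (cnj (f t) * d)"
    by (simp add: algebra_simps)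
  ultimately show ?thesis
    unfolding cmod_power2 by (simp add: power2_eq_square algebra_simps)
qed

lemma cmod_cnj_mult_le: "cmod (cnj z1 * z2) \<le> ((cmod z1)\<^sup>2 + (cmod z2)\<^sup>2) / 2"
  using sum_squares_bound[of "cmod z1" "cmod z2"] by (simp add: norm_mult)

lemma abs_spinor_form_le:
  "\<bar>A * ((cmod z1)\<^sup>2 + (cmod z2)\<^sup>2) + B * Re (cnj z1 * z2) + C * Im (cnj z1 * z2)\<bar>
     \<le> (\<bar>A\<bar> + (\<bar>B\<bar> + \<bar>C\<bar>) / 2) * ((cmod z1)\<^sup>2 + (cmod z2)\<^sup>2)"
proof -
  let ?N = "(cmod z1)\<^sup>2 + (cmod z2)\<^sup>2" and ?P = "cnj z1 * z2"
  have "\<bar>Re ?P\<bar> \<le> ?N / 2" "\<bar>Im ?P\<bar> \<le> ?N / 2"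
    using abs_Re_le_cmod[of ?P] abs_Im_le_cmod[of ?P] cmod_cnj_mult_le[of z1 z2] by linarith+
  have "\<bar>A * ?N + B * Re ?P + C * Im ?P\<bar> \<le> \<bar>A * ?N\<bar> + \<bar>B * Re ?P\<bar> + \<bar>C * Im ?P\<bar>"
    using abs_triangle_ineq[of "A * ?N + B * Re ?P" "C * Im ?P"] abs_triangle_ineq[of "A * ?N" "B * Re ?P"]
    by linarith
  also have "\<dots> = \<bar>A\<bar> * ?N + \<bar>B\<bar> * \<bar>Re ?P\<bar> + \<bar>C\<bar> * \<bar>Im ?P\<bar>"
    by (simp add: abs_mult)
  also have "\<dots> \<le> \<bar>A\<bar> * ?N + \<bar>B\<bar> * (?N / 2) + \<bar>C\<bar> * (?N / 2)"
    using \<open>\<bar>Re ?P\<bar> \<le> ?N / 2\<close> \<open>\<bar>Im ?P\<bar> \<le> ?N / 2\<close> by (intro add_mono mult_left_mono) auto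
  also have "\<dots> = (\<bar>A\<bar> + (\<bar>B\<bar> + \<bar>C\<bar>) / 2) * ?N"
    by (simp add: field_simps)
  finally show ?thesis .
qed

lemma cnj_mult_Re_Im_square_le: "(Re (cnj z1 * z2))\<^sup>2 + (Im (cnj z1 * z2))\<^sup>2 \<le> ((cmod z1)\<^sup>2 + (cmod z2)\<^sup>2)\<^sup>2 / 4"
proof -
  have "(Re (cnj z1 * z2))\<^sup>2 + (Im (cnj z1 * z2))\<^sup>2 = (cmod (cnj z1 * z2))\<^sup>2"
    by (simp add: cmod_power2)
  also have "\<dots> \<le> (((cmod z1)\<^sup>2 + (cmod z2)\<^sup>2) / 2)\<^sup>2"
    by (intro power_mono cmod_cnj_mult_le) simp
  finally show ?thesis by (simp add: power_divide)
qed

lemma backward_gronwall: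
  fixes g :: "real \<Rightarrow> real"
  assumes "a \<le> b"
    and "\<And>x. a \<le> x \<Longrightarrow> x \<le> b \<Longrightarrow> \<exists>D. (g has_real_derivative D) (at x) \<and> D \<le> K * g x"
  shows "g b * exp (- K * (b - a)) \<le> g a"
proof -
  have "g b * exp (- K * b) \<le> g a * exp (- K * a)"
  proof (rule DERIV_nonpos_imp_nonincreasing[where f = "\<lambda>x. g x * exp (- K * x)", OF assms(1)])
    fix x assume x: "a \<le> x" "x \<le> b"
    then obtain D where D: "(g has_real_derivative D) (at x)" "D \<le> K * g x"
      using assms(2) by blast
    have "((\<lambda>x. g x * exp (- K * x)) has_real_derivative (D - K * g x) * exp (- K * x)) (at x)"
      by (auto intro!: derivative_eq_intros D(1) simp: algebra_simps)
    moreover have "(D - K * g x) * exp (- K * x) \<le> 0"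
      using D(2) by (simp add: mult_nonpos_nonneg)
    ultimately show "\<exists>y. ((\<lambda>x. g x * exp (- K * x)) has_real_derivative y) (at x) \<and> y \<le> 0"
      by blast
  qed
  then have "g b * exp (- K * b) * exp (K * a) \<le> g a * exp (- K * a) * exp (K * a)"
    by (simp add: mult_right_mono)
  then show ?thesis
    by (simp add: exp_add[symmetric] algebra_simps)
qed

lemma euler_ode_solution:
  fixes g :: "real \<Rightarrow> real"
  assumes "\<And>x. x > x0 \<Longrightarrow> (g has_real_derivative \<beta> * g x / (x - x0)) (at x)"
  obtains C where "\<And>x. x > x0 \<Longrightarrow> g x = C * (x - x0) powr \<beta>"
proof -
  let ?h = "\<lambda>x. g x * (x - x0) powr (- \<beta>)"
  have "(?h has_real_derivative 0) (at x within {x0<..})" if "x > x0" for x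
  proof -
    have "(?h has_real_derivative \<beta> * g x / (x - x0) * (x - x0) powr (- \<beta>)
        + g x * (- \<beta> * (x - x0) powr (- \<beta> - 1))) (at x)"
      using that by (auto intro!: derivative_eq_intros assms)
    moreover have "(x - x0) powr (- \<beta> - 1) = (x - x0) powr (- \<beta>) / (x - x0)"
      using that by (simp add: powr_diff)
    ultimately show ?thesis
      by (auto intro: has_field_derivative_at_within)
  qed
  then obtain C where C: "\<And>x. x > x0 \<Longrightarrow> ?h x = C"
    using has_field_derivative_zero_constant[of "{x0<..}" ?h] by auto
  show thesis
  proof
    fix x assume "x > x0"
    then show "g x = C * (x - x0) powr \<beta>"
      using C[of x] by (auto simp: powr_minus field_simps)
  qed
qed

section \<open>Divergence of the radial norm\<close>

lemma nn_integral_reciprocal: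
  assumes "x0 < a" "a \<le> b" "0 \<le> c"
  shows "(\<integral>\<^sup>+x\<in>{a..b}. ennreal (c / (x - x0)) \<partial>lborel) = ennreal (c * ln (b - x0) - c * ln (a - x0))"
proof (rule nn_integral_has_integral_lebesgue')
  show "((\<lambda>x. c / (x - x0)) has_integral (c * ln (b - x0) - c * ln (a - x0))) {a..b}"
  proof (rule fundamental_theorem_of_calculus[OF assms(2)])
    fix x assume "x \<in> {a..b}"
    then have "x - x0 > 0" using assms by auto
    then show "((\<lambda>x. c * ln (x - x0)) has_vector_derivative c / (x - x0)) (at x within {a..b})"
      by (auto intro!: derivative_eq_intros simp: has_real_derivative_iff_has_vector_derivative[symmetric])
  qed
qed (use assms in auto)

lemma ennreal_eq_top_if_unbounded:
  assumes "\<And>B. B \<ge> 0 \<Longrightarrow> ennreal B \<le> X"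
  shows "X = \<infinity>"
proof (rule ccontr)
  assume "X \<noteq> \<infinity>"
  then obtain r where "X = ennreal r" "r \<ge> 0"
    by (cases X rule: ennreal_cases) auto
  with assms[of "r + 1"] show False
    by simp
qed

lemma nn_integral_reciprocal_at_top:
  assumes "x0 < T" "c > 0"
  shows "(\<integral>\<^sup>+x\<in>{T..}. ennreal (c / (x - x0)) \<partial>lborel) = \<infinity>"
proof (rule ennreal_eq_top_if_unbounded)
  fix B :: real assume "B \<ge> 0"
  define b where "b = x0 + (T - x0) * exp (B / c)"
  have "(T - x0) * 1 \<le> (T - x0) * exp (B / c)"
    using assms \<open>B \<ge> 0\<close> by (intro mult_left_mono) auto
  then have "T \<le> b"
    by (simp add: b_def)
  have "ln (b - x0) = ln (T - x0) + B / c"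
    using assms by (simp add: b_def ln_mult)
  then have "c * ln (b - x0) - c * ln (T - x0) = B"
    using assms by (simp add: algebra_simps)
  then have "ennreal B = (\<integral>\<^sup>+x\<in>{T..b}. ennreal (c / (x - x0)) \<partial>lborel)"
    using assms \<open>T \<le> b\<close> by (simp add: nn_integral_reciprocal)
  also have "\<dots> \<le> (\<integral>\<^sup>+x\<in>{T..}. ennreal (c / (x - x0)) \<partial>lborel)"
    by (intro nn_integral_mono) (auto split: split_indicator)
  finally show "ennreal B \<le> \<dots>" .
qed

lemma nn_integral_reciprocal_at_right:
  assumes "x0 < b" "c > 0"
  shows "(\<integral>\<^sup>+x\<in>{x0<..b}. ennreal (c / (x - x0)) \<partial>lborel) = \<infinity>"
proof (rule ennreal_eq_top_if_unbounded)
  fix B :: real assume "B \<ge> 0"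
  define a where "a = x0 + (b - x0) * exp (- (B / c))"
  have "(b - x0) * exp (- (B / c)) \<le> b - x0"
    using mult_left_mono[of "exp (- (B / c))" 1 "b - x0"] assms \<open>B \<ge> 0\<close> by simp
  then have "a \<le> b"
    unfolding a_def by linarith
  have "x0 < a"
    using assms by (simp add: a_def)
  have "ln (a - x0) = ln (b - x0) - B / c"
    using assms by (simp add: a_def ln_mult)
  then have "c * ln (b - x0) - c * ln (a - x0) = B"
    using assms by (simp add: field_simps)
  then have "ennreal B = (\<integral>\<^sup>+x\<in>{a..b}. ennreal (c / (x - x0)) \<partial>lborel)"
    using assms \<open>x0 < a\<close> \<open>a \<le> b\<close> by (simp add: nn_integral_reciprocal)
  also have "\<dots> \<le> (\<integral>\<^sup>+x\<in>{x0<..b}. ennreal (c / (x - x0)) \<partial>lborel)"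
    using \<open>x0 < a\<close> by (intro nn_integral_mono) (auto split: split_indicator)
  finally show "ennreal B \<le> \<dots>" .
qed

lemma radial_norm_infinite_near_horizon:
  fixes n :: "real \<Rightarrow> real"
  assumes "M > 0" "c > 0" "d > 0"
    and lower: "\<And>x. M < x \<Longrightarrow> x < M + d \<Longrightarrow> c * (x - M) \<le> n x"
  shows "(\<integral>\<^sup>+x\<in>{M<..}. ennreal (n x) * ennreal ((x\<^sup>2 + a\<^sup>2) / (x - M)\<^sup>2) \<partial>lborel) = \<infinity>"
proof -
  have "(\<integral>\<^sup>+x\<in>{M<..M + d / 2}. ennreal (c * M\<^sup>2 / (x - M)) \<partial>lborel)
      \<le> (\<integral>\<^sup>+x\<in>{M<..}. ennreal (n x) * ennreal ((x\<^sup>2 + a\<^sup>2) / (x - M)\<^sup>2) \<partial>lborel)"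
  proof (intro nn_integral_mono)
    fix x
    show "ennreal (c * M\<^sup>2 / (x - M)) * indicator {M<..M + d / 2} x
        \<le> ennreal (n x) * ennreal ((x\<^sup>2 + a\<^sup>2) / (x - M)\<^sup>2) * indicator {M<..} x"
    proof (cases "x \<in> {M<..M + d / 2}")
      case True
      then have x: "M < x" "x < M + d"
        using assms by auto
      have "0 < c * (x - M)"
        using x assms by simp
      then have "0 \<le> n x"
        using lower[OF x] by linarith
      have "M\<^sup>2 \<le> x\<^sup>2 + a\<^sup>2"
        using x assms power_mono[of M x 2] by (simp add: add_increasing2)
      have "c * M\<^sup>2 / u = c * u * (M\<^sup>2 / u\<^sup>2)" if "u > 0" for u
        using that by (simp add: field_simps power2_eq_square)
      then have "c * M\<^sup>2 / (x - M) = c * (x - M) * (M\<^sup>2 / (x - M)\<^sup>2)"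
        using x by simp
      also have "\<dots> \<le> n x * ((x\<^sup>2 + a\<^sup>2) / (x - M)\<^sup>2)"
        using lower[OF x] \<open>0 \<le> n x\<close> \<open>M\<^sup>2 \<le> x\<^sup>2 + a\<^sup>2\<close> by (intro mult_mono divide_right_mono) auto
      finally show ?thesis
        using True \<open>0 \<le> n x\<close> by (simp add: ennreal_mult'[symmetric] ennreal_leI)
    qed simp
  qed
  then show ?thesis
    using nn_integral_reciprocal_at_right[of M "M + d / 2" "c * M\<^sup>2"] assms by (simp add: top_unique)
qed

lemma radial_norm_infinite_at_infinity:
  fixes n :: "real \<Rightarrow> real"
  assumes "M > 0" "c > 0" "T > M"
    and lower: "\<And>x. T \<le> x \<Longrightarrow> c \<le> x * n x"
  shows "(\<integral>\<^sup>+x\<in>{M<..}. ennreal (n x) * ennreal ((x\<^sup>2 + a\<^sup>2) / (x - M)\<^sup>2) \<partial>lborel) = \<infinity>"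
proof -
  have "(\<integral>\<^sup>+x\<in>{T..}. ennreal (c / x) \<partial>lborel)
      \<le> (\<integral>\<^sup>+x\<in>{M<..}. ennreal (n x) * ennreal ((x\<^sup>2 + a\<^sup>2) / (x - M)\<^sup>2) \<partial>lborel)"
  proof (intro nn_integral_mono)
    fix x
    show "ennreal (c / x) * indicator {T..} x
        \<le> ennreal (n x) * ennreal ((x\<^sup>2 + a\<^sup>2) / (x - M)\<^sup>2) * indicator {M<..} x"
    proof (cases "T \<le> x")
      case True
      then have x: "M < x" "0 < x"
        using assms by auto
      have "(x - M)\<^sup>2 \<le> x\<^sup>2 + a\<^sup>2"
        using x assms power_mono[of "x - M" x 2] by (simp add: add_increasing2)
      then have w: "1 \<le> (x\<^sup>2 + a\<^sup>2) / (x - M)\<^sup>2"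
        using x by simp
      have "c / x \<le> n x"
        using lower[OF True] x by (simp add: divide_le_eq mult.commute)
      moreover have "0 < c / x"
        using assms x by simp
      ultimately have "0 \<le> n x"
        by linarith
      have "c / x \<le> n x * 1"
        using \<open>c / x \<le> n x\<close> by simp
      also have "\<dots> \<le> n x * ((x\<^sup>2 + a\<^sup>2) / (x - M)\<^sup>2)"
        using \<open>0 \<le> n x\<close> w by (rule mult_left_mono[rotated])
      finally show ?thesis
        using True x \<open>0 \<le> n x\<close> by (simp add: ennreal_mult'[symmetric] ennreal_leI)
    qed simp
  qed
  then show ?thesis
    using nn_integral_reciprocal_at_top[of 0 T c] assms by (simp add: top_unique)
qed

section \<open>The radial system\<close>

lemma radial_system_identities:
  fixes u W \<mu> lam :: real and z1 z2 d1 d2 :: complex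
  assumes "u \<noteq> 0"
    and "of_real u * d1 + \<i> * of_real W * z1 + (\<i> * of_real \<mu> - of_real lam) * z2 = 0"
    and "(- \<i> * of_real \<mu> - of_real lam) * z1 + of_real u * d2 - \<i> * of_real W * z2 = 0"
  shows "u * Re (cnj z1 * d1 + cnj z2 * d2) = 2 * (\<mu> * Im (cnj z1 * z2) + lam * Re (cnj z1 * z2))"
    and "W * Re (cnj z1 * d1 + cnj z2 * d2) + \<mu> * Re (cnj d1 * z2 + cnj z1 * d2)
           - lam * Im (cnj d1 * z2 + cnj z1 * d2) = 0"
proof -
  have d1: "d1 = - (\<i> * of_real W * z1 + (\<i> * of_real \<mu> - of_real lam) * z2) / of_real u"
    using assms(1,2) by (simp add: field_simps add_eq_0_iff)
  have d2: "d2 = ((\<i> * of_real \<mu> + of_real lam) * z1 + \<i> * of_real W * z2) / of_real u"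
    using assms(1,3) by (simp add: field_simps)
  show "u * Re (cnj z1 * d1 + cnj z2 * d2) = 2 * (\<mu> * Im (cnj z1 * z2) + lam * Re (cnj z1 * z2))"
    unfolding d1 d2 using assms(1) by (simp add: field_simps)
  show "W * Re (cnj z1 * d1 + cnj z2 * d2) + \<mu> * Re (cnj d1 * z2 + cnj z1 * d2)
          - lam * Im (cnj d1 * z2 + cnj z1 * d2) = 0"
    unfolding d1 d2 using assms(1) by (simp add: field_simps)
qed

lemma radV_expansion:
  "radV a Q e k \<omega> r = radV a Q e k \<omega> M + (2 * \<omega> * M + e * Q) * (r - M) + \<omega> * (r - M)\<^sup>2"
  unfolding radV_def by (simp add: power2_eq_square algebra_simps)

lemma has_real_derivative_radV_div:
  assumes "r > M"
  shows "((\<lambda>x. radV a Q e k \<omega> x / (x - M)) has_real_derivative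
           \<omega> - radV a Q e k \<omega> M / (r - M)\<^sup>2) (at r)"
proof -
  have "((\<lambda>x. radV a Q e k \<omega> x / (x - M)) has_real_derivative
      ((2 * \<omega> * r + e * Q) * (r - M) - radV a Q e k \<omega> r) / (r - M)\<^sup>2) (at r)"
    unfolding radV_def using assms by (auto intro!: derivative_eq_intros simp: power2_eq_square)
  moreover have "(2 * \<omega> * r + e * Q) * (r - M) - radV a Q e k \<omega> r
      = \<omega> * (r - M)\<^sup>2 - radV a Q e k \<omega> M"
    by (subst radV_expansion[of _ _ _ _ _ _ M]) (simp add: power2_eq_square algebra_simps)
  ultimately show ?thesis
    using assms by (simp add: diff_divide_distrib)
qed

locale radial_dirac_solution =
  fixes M a Q m e k \<omega> lam :: real and f1 f2 :: "real \<Rightarrow> complex"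
  assumes M_pos: "M > 0" and m_pos: "m > 0"
    and radial: "radial_solution M a Q m e k \<omega> lam f1 f2"
begin

abbreviation V_M :: real where "V_M \<equiv> radV a Q e k \<omega> M"

abbreviation dV_M :: real where "dV_M \<equiv> 2 * \<omega> * M + e * Q"

definition density :: "real \<Rightarrow> real" where
  "density r = (cmod (f1 r))\<^sup>2 + (cmod (f2 r))\<^sup>2"

definition overlap :: "real \<Rightarrow> complex" where
  "overlap r = cnj (f1 r) * f2 r"

text \<open>This is F of the proof idea: the derivatives of f1 and f2 cancel in its derivative.\<close>

definition virial :: "real \<Rightarrow> real" where
  "virial r = radV a Q e k \<omega> r / (r - M) * density r + 2 * m * r * Re (overlap r) - 2 * lam * Im (overlap r)"

definition weighted_norm :: ennreal where
  "weighted_norm = (\<integral>\<^sup>+r\<in>{M<..}. ennreal (density r) * ennreal ((r\<^sup>2 + a\<^sup>2) / (r - M)\<^sup>2) \<partial>lborel)"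

lemma density_nonneg: "0 \<le> density r"
  by (simp add: density_def)

lemma abs_density_form_le:
  "\<bar>A * density r + B * Re (overlap r) + C * Im (overlap r)\<bar> \<le> (\<bar>A\<bar> + (\<bar>B\<bar> + \<bar>C\<bar>) / 2) * density r"
  unfolding density_def overlap_def by (rule abs_spinor_form_le)

lemma radial_derivatives:
  assumes "r > M"
  shows density_deriv: "(density has_real_derivative
           4 * (m * r * Im (overlap r) + lam * Re (overlap r)) / (r - M)) (at r)"
    and virial_deriv: "(virial has_real_derivative
           (\<omega> - V_M / (r - M)\<^sup>2) * density r + 2 * m * Re (overlap r)) (at r)"
proof -
  define W where "W = radV a Q e k \<omega> r / (r - M)"
  obtain d1 d2 where d: "(f1 has_vector_derivative d1) (at r)" "(f2 has_vector_derivative d2) (at r)"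
    and eq1: "of_real (r - M) * d1 + \<i> * of_real W * f1 r + (\<i> * of_real (m * r) - of_real lam) * f2 r = 0"
    and eq2: "(- \<i> * of_real (m * r) - of_real lam) * f1 r + of_real (r - M) * d2 - \<i> * of_real W * f2 r = 0"
    using radial assms unfolding radial_solution_def W_def by fastforce
  note identities = radial_system_identities[OF _ eq1 eq2]
  define S where "S = cnj (f1 r) * d1 + cnj (f2 r) * d2"
  define P' where "P' = cnj d1 * f2 r + cnj (f1 r) * d2"
  have dN: "(density has_real_derivative 2 * Re S) (at r)"
    using DERIV_add[OF has_real_derivative_cmod_power2[OF d(1)] has_real_derivative_cmod_power2[OF d(2)]]
    unfolding density_def[abs_def] S_def by simp
  have dP: "(overlap has_vector_derivative P') (at r)"
    unfolding overlap_def[abs_def] P'_def by (auto intro!: derivative_eq_intros d)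
  have "(r - M) * Re S = 2 * (m * r * Im (overlap r) + lam * Re (overlap r))"
    using identities(1) assms unfolding S_def overlap_def by simp
  then have "2 * Re S = 4 * (m * r * Im (overlap r) + lam * Re (overlap r)) / (r - M)"
    using assms by (simp add: field_simps)
  with dN show "(density has_real_derivative 4 * (m * r * Im (overlap r) + lam * Re (overlap r)) / (r - M)) (at r)"
    by simp
  have "(virial has_real_derivative (\<omega> - V_M / (r - M)\<^sup>2) * density r + W * (2 * Re S)
         + (2 * m * Re (overlap r) + 2 * m * r * Re P') - 2 * lam * Im P') (at r)"
    unfolding virial_def[abs_def] W_def
    by (rule derivative_eq_intros has_real_derivative_radV_div assms dN dP has_field_derivative_Re
          has_field_derivative_Im refl | simp)+
  moreover have "W * Re S + m * r * Re P' - lam * Im P' = 0"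
    using identities(2) assms unfolding S_def P'_def by simp
  moreover have "(\<omega> - V_M / (r - M)\<^sup>2) * density r + W * (2 * Re S)
         + (2 * m * Re (overlap r) + 2 * m * r * Re P') - 2 * lam * Im P'
      = (\<omega> - V_M / (r - M)\<^sup>2) * density r + 2 * m * Re (overlap r)
         + 2 * (W * Re S + m * r * Re P' - lam * Im P')"
    by (simp add: algebra_simps)
  ultimately show "(virial has_real_derivative (\<omega> - V_M / (r - M)\<^sup>2) * density r + 2 * m * Re (overlap r)) (at r)"
    by simp
qed

lemma overlap_Re_Im_bound: "(Re (overlap r))\<^sup>2 + (Im (overlap r))\<^sup>2 \<le> (density r)\<^sup>2 / 4"
  unfolding density_def overlap_def by (rule cnj_mult_Re_Im_square_le)

lemma virial_expansion:
  assumes "r > M"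
  shows "virial r = (V_M / (r - M) + dV_M + \<omega> * (r - M)) * density r
                     + 2 * m * r * Re (overlap r) - 2 * lam * Im (overlap r)"
proof -
  have "radV a Q e k \<omega> r / (r - M) = V_M / (r - M) + dV_M + \<omega> * (r - M)"
    using assms by (subst radV_expansion[of _ _ _ _ _ _ M]) (simp add: field_simps power2_eq_square)
  then show ?thesis
    unfolding virial_def by simp
qed

lemma weighted_norm_infinite_if_density_ge_near_horizon:
  assumes "c > 0" "d > 0" "\<And>x. M < x \<Longrightarrow> x < M + d \<Longrightarrow> c \<le> density x"
  shows "weighted_norm = \<infinity>"
  unfolding weighted_norm_def
proof (rule radial_norm_infinite_near_horizon)
  show "M > 0" "c / d > 0" "d > 0"
    using M_pos assms(1,2) by auto
  fix x assume x: "M < x" "x < M + d"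
  then have "c / d * (x - M) \<le> c / d * d"
    using assms(1,2) by (intro mult_left_mono) auto
  also have "\<dots> \<le> density x"
    using assms x by simp
  finally show "c / d * (x - M) \<le> density x" .
qed

subsection \<open>Nonvanishing potential at the horizon\<close>

lemma density_pos_leftwards:
  assumes "M < r" "r \<le> r0" "density r0 > 0"
  shows "density r > 0"
proof -
  define K where "K = 2 * (m * r0 + \<bar>lam\<bar>) / (r - M)"
  have "density r0 * exp (- K * (r0 - r)) \<le> density r"
  proof (rule backward_gronwall[OF assms(2)])
    fix x assume x: "r \<le> x" "x \<le> r0"
    have "4 * (m * x * Im (overlap x) + lam * Re (overlap x))
        \<le> \<bar>0 * density x + (4 * lam) * Re (overlap x) + (4 * m * x) * Im (overlap x)\<bar>"
      by (simp add: algebra_simps)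
    also have "\<dots> \<le> (\<bar>4 * lam\<bar> + \<bar>4 * m * x\<bar>) / 2 * density x"
      using abs_density_form_le[of 0] by simp
    also have "\<dots> \<le> 2 * (m * r0 + \<bar>lam\<bar>) * density x"
      using x assms M_pos m_pos density_nonneg[of x] by (intro mult_right_mono) (auto simp: abs_mult)
    finally have num: "4 * (m * x * Im (overlap x) + lam * Re (overlap x)) \<le> 2 * (m * r0 + \<bar>lam\<bar>) * density x" .
    have "4 * (m * x * Im (overlap x) + lam * Re (overlap x)) / (x - M) \<le> 2 * (m * r0 + \<bar>lam\<bar>) * density x / (r - M)"
      using num x assms M_pos m_pos density_nonneg[of x] by (intro frac_le mult_nonneg_nonneg) auto
    then have "4 * (m * x * Im (overlap x) + lam * Re (overlap x)) / (x - M) \<le> K * density x"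
      unfolding K_def by simp
    then show "\<exists>D. (density has_real_derivative D) (at x) \<and> D \<le> K * density x"
      using density_deriv[of x] x assms by auto
  qed
  moreover have "0 < density r0 * exp (- K * (r0 - r))"
    using assms by simp
  ultimately show ?thesis
    by linarith
qed

definition scaled_virial :: "real \<Rightarrow> real" where
  "scaled_virial r = (r - M) * virial r / V_M"

lemma scaled_virial_expansion:
  assumes "V_M \<noteq> 0" "r > M"
  shows "scaled_virial r = density r
           + ((dV_M * (r - M) + \<omega> * (r - M)\<^sup>2) / V_M * density r
              + 2 * m * r * (r - M) / V_M * Re (overlap r) + (- 2 * lam * (r - M) / V_M) * Im (overlap r))"
proof -
  have "u * ((V_M / u + dV_M + \<omega> * u) * n + 2 * m * r * p - 2 * lam * q) / V_M
      = n + ((dV_M * u + \<omega> * u\<^sup>2) / V_M * n + 2 * m * r * u / V_M * p + (- 2 * lam * u / V_M) * q)"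
    if "u \<noteq> 0" for u n p q
    using that assms(1) by (simp add: field_simps power2_eq_square)
  then show ?thesis
    unfolding scaled_virial_def virial_expansion[OF assms(2)] using assms(2) by simp
qed

lemma scaled_virial_deriv:
  assumes "V_M \<noteq> 0" "r > M"
  shows "(scaled_virial has_real_derivative
           (dV_M + 2 * \<omega> * (r - M)) / V_M * density r + 2 * m * (2 * r - M) / V_M * Re (overlap r)
           + (- 2 * lam / V_M) * Im (overlap r)) (at r)"
proof -
  have gen: "((V_M / u + dV_M + \<omega> * u) * n + 2 * m * r * p - 2 * lam * q
        + u * ((\<omega> - V_M / u\<^sup>2) * n + 2 * m * p)) / V_M
      = (dV_M + 2 * \<omega> * u) / V_M * n + 2 * m * v / V_M * p + (- 2 * lam / V_M) * q"
    if "u \<noteq> 0" "v = r + u" for u v n p q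
    using that assms(1) by (simp add: field_simps power2_eq_square)
  have "(scaled_virial has_real_derivative
      (virial r + (r - M) * ((\<omega> - V_M / (r - M)\<^sup>2) * density r + 2 * m * Re (overlap r))) / V_M) (at r)"
    unfolding scaled_virial_def[abs_def]
    by (auto intro!: derivative_eq_intros virial_deriv assms)
  moreover have "(virial r + (r - M) * ((\<omega> - V_M / (r - M)\<^sup>2) * density r + 2 * m * Re (overlap r))) / V_M
      = (dV_M + 2 * \<omega> * (r - M)) / V_M * density r + 2 * m * (2 * r - M) / V_M * Re (overlap r)
        + (- 2 * lam / V_M) * Im (overlap r)"
    unfolding virial_expansion[OF assms(2)]
    using gen[of "r - M" "2 * r - M" "density r" "Re (overlap r)" "Im (overlap r)"] assms(2)
    by simp
  ultimately show ?thesis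
    by simp
qed

lemma scaled_virial_near_density:
  assumes "V_M \<noteq> 0"
  obtains b where "b > M" "\<And>x. M < x \<Longrightarrow> x < b \<Longrightarrow> \<bar>scaled_virial x - density x\<bar> \<le> density x / 2"
proof -
  define \<kappa> where "\<kappa> x = \<bar>(dV_M * (x - M) + \<omega> * (x - M)\<^sup>2) / V_M\<bar>
      + (\<bar>2 * m * x * (x - M) / V_M\<bar> + \<bar>- 2 * lam * (x - M) / V_M\<bar>) / 2" for x
  have "(\<kappa> \<longlongrightarrow> 0) (at_right M)"
    unfolding \<kappa>_def using assms by (auto intro!: tendsto_eq_intros)
  then have "eventually (\<lambda>x. \<kappa> x < 1 / 2) (at_right M)"
    by (rule order_tendstoD) simp
  then obtain b where "b > M" and b: "\<And>x. M < x \<Longrightarrow> x < b \<Longrightarrow> \<kappa> x < 1 / 2"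
    unfolding eventually_at_right_field by blast
  show thesis
  proof (rule that[OF \<open>b > M\<close>])
    fix x assume x: "M < x" "x < b"
    have "scaled_virial x - density x = (dV_M * (x - M) + \<omega> * (x - M)\<^sup>2) / V_M * density x
        + 2 * m * x * (x - M) / V_M * Re (overlap x) + (- 2 * lam * (x - M) / V_M) * Im (overlap x)"
      using scaled_virial_expansion[OF assms x(1)] by simp
    then have "\<bar>scaled_virial x - density x\<bar> \<le> \<kappa> x * density x"
      unfolding \<kappa>_def by (simp only: abs_density_form_le)
    also have "\<dots> \<le> 1 / 2 * density x"
      using b[OF x] density_nonneg[of x] by (intro mult_right_mono) auto
    finally show "\<bar>scaled_virial x - density x\<bar> \<le> density x / 2"
      by simp
  qed
qed

lemma scaled_virial_deriv_bound:
  assumes "V_M \<noteq> 0"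
  obtains b K where "b > M" "K \<ge> 0"
    "\<And>x. M < x \<Longrightarrow> x < b \<Longrightarrow> \<exists>D. (scaled_virial has_real_derivative D) (at x) \<and> D \<le> K * density x"
proof -
  define \<kappa> where "\<kappa> x = \<bar>(dV_M + 2 * \<omega> * (x - M)) / V_M\<bar>
      + (\<bar>2 * m * (2 * x - M) / V_M\<bar> + \<bar>- 2 * lam / V_M\<bar>) / 2" for x
  have "(\<kappa> \<longlongrightarrow> \<kappa> M) (at_right M)"
    unfolding \<kappa>_def using assms by (intro tendsto_intros) auto
  then have "eventually (\<lambda>x. \<kappa> x < \<kappa> M + 1) (at_right M)"
    by (rule order_tendstoD) simp
  then obtain b where "b > M" and b: "\<And>x. M < x \<Longrightarrow> x < b \<Longrightarrow> \<kappa> x < \<kappa> M + 1"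
    unfolding eventually_at_right_field by blast
  have "\<kappa> M + 1 \<ge> 0"
    unfolding \<kappa>_def by (intro add_nonneg_nonneg) auto
  then show thesis
  proof (rule that[OF \<open>b > M\<close>])
    fix x assume x: "M < x" "x < b"
    let ?D = "(dV_M + 2 * \<omega> * (x - M)) / V_M * density x + 2 * m * (2 * x - M) / V_M * Re (overlap x)
           + (- 2 * lam / V_M) * Im (overlap x)"
    have "?D \<le> \<kappa> x * density x"
      unfolding \<kappa>_def using abs_density_form_le abs_le_D1 by blast
    also have "\<dots> \<le> (\<kappa> M + 1) * density x"
      using b[OF x] density_nonneg[of x] by (intro mult_right_mono) auto
    finally show "\<exists>D. (scaled_virial has_real_derivative D) (at x) \<and> D \<le> (\<kappa> M + 1) * density x"
      using scaled_virial_deriv[OF assms x(1)] by blast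
  qed
qed

lemma scaled_virial_comparable:
  assumes "V_M \<noteq> 0"
  obtains b K where "b > M" "K \<ge> 0"
    "\<And>x. M < x \<Longrightarrow> x < b \<Longrightarrow> density x \<le> 2 * scaled_virial x \<and> scaled_virial x \<le> 2 * density x"
    "\<And>x. M < x \<Longrightarrow> x < b \<Longrightarrow> \<exists>D. (scaled_virial has_real_derivative D) (at x) \<and> D \<le> K * scaled_virial x"
proof -
  obtain b1 where "b1 > M"
    and near: "\<And>x. M < x \<Longrightarrow> x < b1 \<Longrightarrow> \<bar>scaled_virial x - density x\<bar> \<le> density x / 2"
    using scaled_virial_near_density[OF assms] by blast
  obtain b2 K where "b2 > M" "K \<ge> 0"
    and deriv: "\<And>x. M < x \<Longrightarrow> x < b2 \<Longrightarrow>
                  \<exists>D. (scaled_virial has_real_derivative D) (at x) \<and> D \<le> K * density x"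
    using scaled_virial_deriv_bound[OF assms] by blast
  have comparable: "density x \<le> 2 * scaled_virial x \<and> scaled_virial x \<le> 2 * density x"
    if "M < x" "x < min b1 b2" for x
    using near[of x] that unfolding abs_le_iff by auto
  show thesis
  proof (rule that[of "min b1 b2" "2 * K"])
    fix x assume x: "M < x" "x < min b1 b2"
    obtain D where "(scaled_virial has_real_derivative D) (at x)" "D \<le> K * density x"
      using deriv[of x] x by auto
    moreover have "K * density x \<le> 2 * K * scaled_virial x"
      using comparable[OF x] \<open>K \<ge> 0\<close> mult_left_mono[of "density x" "2 * scaled_virial x" K] by simp
    ultimately show "\<exists>D. (scaled_virial has_real_derivative D) (at x) \<and> D \<le> 2 * K * scaled_virial x"
      by auto
  qed (use \<open>b1 > M\<close> \<open>b2 > M\<close> \<open>K \<ge> 0\<close> comparable in auto)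
qed

lemma density_lower_bound_if_V_M_nonzero:
  assumes "V_M \<noteq> 0" "M < r0" "density r0 > 0"
  obtains c r1 where "c > 0" "M < r1" "\<And>x. M < x \<Longrightarrow> x < r1 \<Longrightarrow> c \<le> density x"
proof -
  obtain b K where "b > M" "K \<ge> 0"
    and comparable: "\<And>x. M < x \<Longrightarrow> x < b \<Longrightarrow> density x \<le> 2 * scaled_virial x \<and> scaled_virial x \<le> 2 * density x"
    and deriv: "\<And>x. M < x \<Longrightarrow> x < b \<Longrightarrow>
                  \<exists>D. (scaled_virial has_real_derivative D) (at x) \<and> D \<le> K * scaled_virial x"
    using scaled_virial_comparable[OF assms(1)] by blast
  define r1 where "r1 = (M + min b r0) / 2"
  have r1: "M < r1" "r1 < b" "r1 \<le> r0"
    using \<open>b > M\<close> assms(2) by (auto simp: r1_def)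
  have "scaled_virial r1 > 0"
    using density_pos_leftwards[OF r1(1) r1(3) assms(3)] comparable[OF r1(1,2)] by linarith
  define c where "c = scaled_virial r1 * exp (- K * (r1 - M)) / 2"
  show thesis
  proof (rule that[of c r1])
    show "c > 0" "M < r1"
      using \<open>scaled_virial r1 > 0\<close> r1 by (simp_all add: c_def)
    fix x assume x: "M < x" "x < r1"
    have "scaled_virial r1 * exp (- K * (r1 - x)) \<le> scaled_virial x"
      by (rule backward_gronwall) (use deriv x r1 in auto)
    moreover have "exp (- K * (r1 - M)) \<le> exp (- K * (r1 - x))"
      using x \<open>K \<ge> 0\<close> by (simp add: mult_left_mono)
    then have "2 * c \<le> scaled_virial r1 * exp (- K * (r1 - x))"
      using \<open>scaled_virial r1 > 0\<close> by (simp add: c_def)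
    ultimately show "c \<le> density x"
      using comparable[of x] x r1 by linarith
  qed
qed

lemma weighted_norm_infinite_if_V_M_nonzero:
  assumes "V_M \<noteq> 0" "M < r0" "density r0 > 0"
  shows "weighted_norm = \<infinity>"
proof -
  obtain c r1 where "c > 0" "M < r1" "\<And>x. M < x \<Longrightarrow> x < r1 \<Longrightarrow> c \<le> density x"
    using density_lower_bound_if_V_M_nonzero[OF assms] by blast
  then show ?thesis
    using weighted_norm_infinite_if_density_ge_near_horizon[of c "r1 - M"] by simp
qed

subsection \<open>Vanishing potential at the horizon\<close>

lemma omega_virial_mono:
  assumes "V_M = 0" "m \<le> \<bar>\<omega>\<bar>" "M < x" "x \<le> y"
  shows "\<omega> * virial x \<le> \<omega> * virial y"
proof (rule DERIV_nonneg_imp_nondecreasing[OF assms(4)])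
  fix z assume z: "x \<le> z" "z \<le> y"
  have "((\<lambda>z. \<omega> * virial z) has_real_derivative \<omega> * (\<omega> * density z + 2 * m * Re (overlap z))) (at z)"
    using virial_deriv[of z] assms z by (auto intro!: derivative_eq_intros)
  moreover have "0 \<le> \<omega> * (\<omega> * density z + 2 * m * Re (overlap z))"
  proof -
    have "\<bar>2 * m * Re (overlap z)\<bar> \<le> m * density z"
      using abs_density_form_le[where A = 0 and B = "2 * m" and C = 0 and r = z] m_pos by simp
    then have "\<bar>\<omega> * (2 * m * Re (overlap z))\<bar> \<le> \<bar>\<omega>\<bar> * (m * density z)"
      by (simp add: abs_mult mult_left_mono)
    moreover have "\<bar>\<omega>\<bar> * (m * density z) \<le> \<bar>\<omega>\<bar> * (\<bar>\<omega>\<bar> * density z)"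
      using assms(2) density_nonneg[of z] by (intro mult_left_mono mult_right_mono) auto
    moreover have "\<omega> * (\<omega> * density z + 2 * m * Re (overlap z))
        = \<bar>\<omega>\<bar> * (\<bar>\<omega>\<bar> * density z) + \<omega> * (2 * m * Re (overlap z))"
      by (simp add: algebra_simps)
    ultimately show ?thesis
      unfolding abs_le_iff by linarith
  qed
  ultimately show "\<exists>D. ((\<lambda>z. \<omega> * virial z) has_real_derivative D) (at z) \<and> 0 \<le> D"
    by blast
qed

lemma abs_virial_le_if_V_M_zero:
  assumes "V_M = 0" "M < r"
  shows "\<bar>virial r\<bar> \<le> (\<bar>dV_M\<bar> + \<bar>\<omega>\<bar> * r + m * r + \<bar>lam\<bar>) * density r"
proof -
  have "virial r = (dV_M + \<omega> * (r - M)) * density r + (2 * m * r) * Re (overlap r) + (- 2 * lam) * Im (overlap r)"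
    using virial_expansion[OF assms(2)] assms(1) by simp
  then have "\<bar>virial r\<bar> \<le> (\<bar>dV_M + \<omega> * (r - M)\<bar> + (\<bar>2 * m * r\<bar> + \<bar>- 2 * lam\<bar>) / 2) * density r"
    by (simp only: abs_density_form_le)
  also have "\<dots> \<le> (\<bar>dV_M\<bar> + \<bar>\<omega>\<bar> * r + m * r + \<bar>lam\<bar>) * density r"
  proof (intro mult_right_mono density_nonneg)
    have "\<bar>\<omega> * (r - M)\<bar> \<le> \<bar>\<omega>\<bar> * r"
      using assms(2) M_pos by (simp add: abs_mult mult_left_mono)
    moreover have "(\<bar>2 * m * r\<bar> + \<bar>- 2 * lam\<bar>) / 2 = m * r + \<bar>lam\<bar>"
      using assms(2) M_pos m_pos by (simp add: abs_mult)
    ultimately show "\<bar>dV_M + \<omega> * (r - M)\<bar> + (\<bar>2 * m * r\<bar> + \<bar>- 2 * lam\<bar>) / 2 \<le> \<bar>dV_M\<bar> + \<bar>\<omega>\<bar> * r + m * r + \<bar>lam\<bar>"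
      using abs_triangle_ineq[of dV_M "\<omega> * (r - M)"] by linarith
  qed
  finally show ?thesis .
qed

lemma weighted_norm_infinite_if_omega_virial_pos:
  assumes "V_M = 0" "m \<le> \<bar>\<omega>\<bar>" "M < t" "\<omega> * virial t > 0"
  shows "weighted_norm = \<infinity>"
proof -
  define C where "C = \<bar>\<omega>\<bar> * (\<bar>dV_M\<bar> + \<bar>\<omega>\<bar> + m + \<bar>lam\<bar>)"
  have "C > 0"
    using assms(2) m_pos by (simp add: C_def add_nonneg_pos)
  show ?thesis
    unfolding weighted_norm_def
  proof (rule radial_norm_infinite_at_infinity)
    show "M > 0" "\<omega> * virial t / C > 0" "max t 1 > M"
      using M_pos assms(3,4) \<open>C > 0\<close> by auto
    fix x assume x: "max t 1 \<le> x"
    then have "M < x" "1 \<le> x"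
      using assms(3) by auto
    have "\<omega> * virial t \<le> \<omega> * virial x"
      using omega_virial_mono assms x by auto
    also have "\<dots> \<le> \<bar>\<omega>\<bar> * \<bar>virial x\<bar>"
      by (simp add: abs_mult[symmetric])
    also have "\<dots> \<le> \<bar>\<omega>\<bar> * ((\<bar>dV_M\<bar> + \<bar>\<omega>\<bar> * x + m * x + \<bar>lam\<bar>) * density x)"
      using abs_virial_le_if_V_M_zero[OF assms(1) \<open>M < x\<close>] by (simp add: mult_left_mono)
    also have "\<dots> \<le> C * (x * density x)"
    proof -
      have "\<bar>dV_M\<bar> + \<bar>\<omega>\<bar> * x + m * x + \<bar>lam\<bar> \<le> (\<bar>dV_M\<bar> + \<bar>\<omega>\<bar> + m + \<bar>lam\<bar>) * x"
        using \<open>1 \<le> x\<close> mult_right_mono[of 1 x "\<bar>dV_M\<bar>"] mult_right_mono[of 1 x "\<bar>lam\<bar>"]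
        by (simp add: algebra_simps)
      then have "(\<bar>dV_M\<bar> + \<bar>\<omega>\<bar> * x + m * x + \<bar>lam\<bar>) * density x
          \<le> (\<bar>dV_M\<bar> + \<bar>\<omega>\<bar> + m + \<bar>lam\<bar>) * x * density x"
        by (rule mult_right_mono[OF _ density_nonneg])
      then show ?thesis
        using mult_left_mono[OF _ abs_ge_zero[of \<omega>]] unfolding C_def by (simp add: mult.assoc)
    qed
    finally show "\<omega> * virial t / C \<le> x * density x"
      using \<open>C > 0\<close> by (simp add: divide_le_eq mult.commute)
  qed
qed

lemma weighted_norm_infinite_if_omega_virial_neg:
  assumes "V_M = 0" "m \<le> \<bar>\<omega>\<bar>" "M < t" "\<omega> * virial t < 0"
  shows "weighted_norm = \<infinity>"
proof -
  define C where "C = \<bar>\<omega>\<bar> * (\<bar>dV_M\<bar> + (\<bar>\<omega>\<bar> + m) * (M + 1) + \<bar>lam\<bar>)"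
  have "0 < (\<bar>\<omega>\<bar> + m) * (M + 1)"
    using m_pos M_pos by (intro mult_pos_pos) auto
  then have "C > 0"
    using assms(2) m_pos unfolding C_def by (intro mult_pos_pos) auto
  define c where "c = - \<omega> * virial t / C"
  have "c > 0"
    unfolding c_def using assms(4) \<open>C > 0\<close> by (intro divide_pos_pos) auto
  show ?thesis
  proof (rule weighted_norm_infinite_if_density_ge_near_horizon)
    show "c > 0" "min (t - M) 1 > 0"
      using \<open>c > 0\<close> assms(3) by auto
    fix x assume x: "M < x" "x < M + min (t - M) 1"
    have "- \<omega> * virial t \<le> - \<omega> * virial x"
      using omega_virial_mono[OF assms(1,2) x(1), of t] x by simp
    also have "\<dots> \<le> \<bar>\<omega>\<bar> * \<bar>virial x\<bar>"
      by (simp add: abs_mult[symmetric])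
    also have "\<dots> \<le> \<bar>\<omega>\<bar> * ((\<bar>dV_M\<bar> + \<bar>\<omega>\<bar> * x + m * x + \<bar>lam\<bar>) * density x)"
      using abs_virial_le_if_V_M_zero[OF assms(1) x(1)] by (simp add: mult_left_mono)
    also have "\<dots> \<le> C * density x"
    proof -
      have "(\<bar>\<omega>\<bar> + m) * x \<le> (\<bar>\<omega>\<bar> + m) * (M + 1)"
        using x m_pos by (intro mult_left_mono) auto
      then have "(\<bar>dV_M\<bar> + \<bar>\<omega>\<bar> * x + m * x + \<bar>lam\<bar>) * density x
          \<le> (\<bar>dV_M\<bar> + (\<bar>\<omega>\<bar> + m) * (M + 1) + \<bar>lam\<bar>) * density x"
        by (intro mult_right_mono density_nonneg) (simp add: algebra_simps)
      then show ?thesis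
        using mult_left_mono[OF _ abs_ge_zero[of \<omega>]] unfolding C_def by (simp add: mult.assoc)
    qed
    finally have "- \<omega> * virial t \<le> density x * C"
      by (simp only: mult.commute)
    then show "c \<le> density x"
      unfolding c_def using \<open>C > 0\<close> by (simp only: pos_divide_le_eq)
  qed
qed

lemma virial_vanishes_if_V_M_zero:
  assumes "V_M = 0" "m \<le> \<bar>\<omega>\<bar>" "weighted_norm \<noteq> \<infinity>" "M < r"
  shows "virial r = 0"
proof -
  have "\<omega> * virial r = 0"
    using weighted_norm_infinite_if_omega_virial_pos[OF assms(1,2,4)]
      weighted_norm_infinite_if_omega_virial_neg[OF assms(1,2,4)] assms(3)
    by (cases "\<omega> * virial r" "0 :: real" rule: linorder_cases) auto
  moreover have "\<omega> \<noteq> 0"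
    using assms(2) m_pos by auto
  ultimately show ?thesis
    by simp
qed

lemma spinor_degenerate_if_V_M_zero:
  assumes "V_M = 0" "m \<le> \<bar>\<omega>\<bar>" "weighted_norm \<noteq> \<infinity>" "M < r0" "density r0 > 0"
  shows "\<bar>\<omega>\<bar> = m"
    and "\<And>r. M < r \<Longrightarrow> Re (overlap r) = - \<omega> / (2 * m) * density r \<and> Im (overlap r) = 0"
proof -
  have balance: "\<omega> * density r + 2 * m * Re (overlap r) = 0" if "M < r" for r
  proof -
    have "(virial has_real_derivative \<omega> * density r + 2 * m * Re (overlap r)) (at r)"
      using virial_deriv[OF that] assms(1) by simp
    moreover have "(virial has_real_derivative 0) (at r)"
      by (rule has_field_derivative_transform_within_open[OF DERIV_const, of "{M<..}"])
         (use that virial_vanishes_if_V_M_zero[OF assms(1-3)] in auto)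
    ultimately show ?thesis
      by (rule DERIV_unique)
  qed
  have "\<omega> * density r0 = - (2 * m * Re (overlap r0))"
    using balance[OF assms(4)] by linarith
  have "\<bar>\<omega>\<bar> * density r0 = \<bar>\<omega> * density r0\<bar>"
    using density_nonneg[of r0] by (simp add: abs_mult)
  also have "\<dots> = \<bar>2 * m * Re (overlap r0)\<bar>"
    using \<open>\<omega> * density r0 = - (2 * m * Re (overlap r0))\<close> by simp
  also have "\<dots> \<le> m * density r0"
    using abs_density_form_le[where A = 0 and B = "2 * m" and C = 0 and r = r0] m_pos by simp
  finally have "\<bar>\<omega>\<bar> * density r0 \<le> m * density r0" .
  then show "\<bar>\<omega>\<bar> = m"
    using assms(2,5) by simp
  fix r assume "M < r"
  show "Re (overlap r) = - \<omega> / (2 * m) * density r \<and> Im (overlap r) = 0"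
  proof
    show Re: "Re (overlap r) = - \<omega> / (2 * m) * density r"
      using balance[OF \<open>M < r\<close>] m_pos by (simp add: field_simps)
    have "\<omega>\<^sup>2 = m\<^sup>2"
      using \<open>\<bar>\<omega>\<bar> = m\<close> by (metis power2_abs)
    then have "(Re (overlap r))\<^sup>2 = (density r)\<^sup>2 / 4"
      unfolding Re using m_pos by (simp add: power_divide power_mult_distrib)
    then show "Im (overlap r) = 0"
      using overlap_Re_Im_bound[of r] by simp
  qed
qed

lemma density_eq_powr_if_V_M_zero:
  assumes "V_M = 0" "m \<le> \<bar>\<omega>\<bar>" "weighted_norm \<noteq> \<infinity>" "M < r0" "density r0 > 0"
  obtains C \<beta> where "C > 0" "\<And>r. M < r \<Longrightarrow> density r = C * (r - M) powr \<beta>"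
proof -
  note degenerate = spinor_degenerate_if_V_M_zero[OF assms]
  define \<beta> where "\<beta> = - 2 * lam * \<omega> / m"
  have "(density has_real_derivative \<beta> * density r / (r - M)) (at r)" if "M < r" for r
    using density_deriv[OF that] degenerate(2)[OF that] m_pos by (simp add: \<beta>_def field_simps)
  then obtain C where C: "\<And>r. M < r \<Longrightarrow> density r = C * (r - M) powr \<beta>"
    using euler_ode_solution by blast
  moreover have "C > 0"
    using C[OF assms(4)] assms(4,5) by (simp add: zero_less_mult_iff)
  ultimately show thesis
    using that by blast
qed

lemma weighted_norm_infinite_if_V_M_zero:
  assumes "V_M = 0" "m \<le> \<bar>\<omega>\<bar>" "M < r0" "density r0 > 0"
  shows "weighted_norm = \<infinity>"
proof (rule ccontr)
  assume finite: "weighted_norm \<noteq> \<infinity>"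
  obtain C \<beta> where "C > 0" and C: "\<And>r. M < r \<Longrightarrow> density r = C * (r - M) powr \<beta>"
    using density_eq_powr_if_V_M_zero[OF assms(1,2) finite assms(3,4)] by blast
  have "weighted_norm = \<infinity>"
  proof (cases "\<beta> \<le> 1")
    case True
    show ?thesis
      unfolding weighted_norm_def
    proof (rule radial_norm_infinite_near_horizon[of M C 1])
      fix x assume x: "M < x" "x < M + 1"
      then have "(x - M) powr 1 \<le> (x - M) powr \<beta>"
        using True by (intro powr_mono') auto
      then show "C * (x - M) \<le> density x"
        using C[OF x(1)] \<open>C > 0\<close> x by simp
    qed (use M_pos \<open>C > 0\<close> in auto)
  next
    case False
    show ?thesis
      unfolding weighted_norm_def
    proof (rule radial_norm_infinite_at_infinity[of M C "M + 1"])
      fix x assume x: "M + 1 \<le> x"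
      then have "1 \<le> (x - M) powr \<beta>"
        using False by (intro ge_one_powr_ge_zero) auto
      then have "C \<le> density x"
        using C[of x] \<open>C > 0\<close> x M_pos by simp
      also have "\<dots> \<le> x * density x"
        using x M_pos density_nonneg[of x] by (simp add: mult_le_cancel_right1)
      finally show "C \<le> x * density x" .
    qed (use M_pos \<open>C > 0\<close> in auto)
  qed
  with finite show False
    by simp
qed

end

theorem mainTheorem5:
  fixes M a Q m e k \<omega> :: real
  assumes "M > 0" and "M^2 = a^2 + Q^2" and "m > 0" and "half_integer k"
    and "energy_eigenvalue M a Q m e k \<omega>"
  shows "m^2 - \<omega>^2 > 0"
proof (rule ccontr)
  assume "\<not> m^2 - \<omega>^2 > 0"
  then have "m \<le> \<bar>\<omega>\<bar>"
    using abs_le_square_iff[of m \<omega>] \<open>m > 0\<close> by simp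
  obtain lam f1 f2 where sol: "radial_solution M a Q m e k \<omega> lam f1 f2"
    and nonzero: "\<exists>r\<in>{M<..}. f1 r \<noteq> 0 \<or> f2 r \<noteq> 0"
    and finite: "(\<integral>\<^sup>+ r \<in> {M<..}. ennreal ((cmod (f1 r))^2 + (cmod (f2 r))^2)
                   * ennreal ((r^2 + a^2) / (r - M)^2) \<partial>lborel) < \<infinity>"
    using assms(5) unfolding energy_eigenvalue_def by blast
  interpret radial_dirac_solution M a Q m e k \<omega> lam f1 f2
    using assms(1,3) sol by unfold_locales
  obtain r0 where "M < r0" "density r0 > 0"
    using nonzero by (auto simp: density_def add_pos_nonneg add_nonneg_pos)
  have "weighted_norm = \<infinity>"
    using weighted_norm_infinite_if_V_M_nonzero weighted_norm_infinite_if_V_M_zero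
      \<open>m \<le> \<bar>\<omega>\<bar>\<close> \<open>M < r0\<close> \<open>density r0 > 0\<close> by blast
  with finite show False
    by (simp add: weighted_norm_def density_def)
qed

end
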